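(* Let $\mathbf{P}=(\Omega,\preccurlyeq_{\mathbf{P}})$ be a poset on a finite set $\Omega$. The following are equivalent: (1) $\mathbf{P}$ is hierarchical; (2) for any $D,B\in\mathcal{I}(\overline{\mathbf{P}})$, $|D|=|B|$ implies $|\min_{\mathbf{P}}(D)|=|\min_{\mathbf{P}}(B)|$; (3) for any $A\subseteq\Omega$ such that $a\preccurlyeq_{\mathbf{P}}b$ for all $a\in A$, $b\in\Omega-A$, it holds that $c\preccurlyeq_{\mathbf{P}}d$ for all $c\in A-\max_{\mathbf{P}}(A)$, $d\in\max_{\mathbf{P}}(A)$; (4) for any $I,J\in\mathcal{I}(\mathbf{P})$, $|I|=|J|$ implies $|\max_{\mathbf{P}}(I)|=|\max_{\mathbf{P}}(J)|$; (5) for any $B\subseteq\Omega$ such that $a\preccurlyeq_{\mathbf{P}}b$ for all $a\in\Omega-B$, $b\in B$, it holds that $c\preccurlyeq_{\mathbf{P}}d$ for all $c\in\min_{\mathbf{P}}(B)$, $d\in B-\min_{\mathbf{P}}(B)$.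
   Context: $\mathcal{I}(\mathbf{P})$ is the set of ideals (down-closed subsets) of $\mathbf{P}$; $\overline{\mathbf{P}}$ is the dual poset ($u\preccurlyeq_{\overline{\mathbf{P}}}v\iff v\preccurlyeq_{\mathbf{P}}u$), so $\mathcal{I}(\overline{\mathbf{P}})$ is the set of up-closed subsets of $\mathbf{P}$. $\max_{\mathbf{P}}(B)$, $\min_{\mathbf{P}}(B)$ are the sets of maximal, minimal elements of $B$. $\mathrm{len}(y)$ is the largest cardinality of a chain in $\mathbf{P}$ with greatest element $y$; $\mathbf{P}$ is hierarchical if for all $u,v$ with $\mathrm{len}(u)+1\leqslant\mathrm{len}(v)$ we have $u\preccurlyeq_{\mathbf{P}}v$. *)

theory Defs
  imports Main
begin

definition poset_on :: "'a set \<Rightarrow> ('a \<Rightarrow> 'a \<Rightarrow> bool) \<Rightarrow> bool" where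
  "poset_on \<Omega> le \<longleftrightarrow>
     (\<forall>x\<in>\<Omega>. le x x) \<and>
     (\<forall>x\<in>\<Omega>. \<forall>y\<in>\<Omega>. le x y \<and> le y x \<longrightarrow> x = y) \<and>
     (\<forall>x\<in>\<Omega>. \<forall>y\<in>\<Omega>. \<forall>z\<in>\<Omega>. le x y \<and> le y z \<longrightarrow> le x z)"

definition ideals :: "'a set \<Rightarrow> ('a \<Rightarrow> 'a \<Rightarrow> bool) \<Rightarrow> 'a set set" where
  "ideals \<Omega> le = {I. I \<subseteq> \<Omega> \<and> (\<forall>v\<in>I. \<forall>u\<in>\<Omega>. le u v \<longrightarrow> u \<in> I)}"

definition dual_rel :: "('a \<Rightarrow> 'a \<Rightarrow> bool) \<Rightarrow> 'a \<Rightarrow> 'a \<Rightarrow> bool" where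
  "dual_rel le u v = le v u"

definition maxs :: "('a \<Rightarrow> 'a \<Rightarrow> bool) \<Rightarrow> 'a set \<Rightarrow> 'a set" where
  "maxs le B = {b\<in>B. \<forall>c\<in>B. le b c \<longrightarrow> c = b}"

definition mins :: "('a \<Rightarrow> 'a \<Rightarrow> bool) \<Rightarrow> 'a set \<Rightarrow> 'a set" where
  "mins le B = {b\<in>B. \<forall>c\<in>B. le c b \<longrightarrow> c = b}"

definition is_chain :: "'a set \<Rightarrow> ('a \<Rightarrow> 'a \<Rightarrow> bool) \<Rightarrow> 'a set \<Rightarrow> bool" where
  "is_chain \<Omega> le C \<longleftrightarrow> C \<subseteq> \<Omega> \<and> (\<forall>x\<in>C. \<forall>y\<in>C. le x y \<or> le y x)"

definition len :: "'a set \<Rightarrow> ('a \<Rightarrow> 'a \<Rightarrow> bool) \<Rightarrow> 'a \<Rightarrow> nat" where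
  "len \<Omega> le y = Max {card C | C. is_chain \<Omega> le C \<and> y \<in> C \<and> (\<forall>c\<in>C. le c y)}"

definition hierarchical :: "'a set \<Rightarrow> ('a \<Rightarrow> 'a \<Rightarrow> bool) \<Rightarrow> bool" where
  "hierarchical \<Omega> le \<longleftrightarrow>
     (\<forall>u\<in>\<Omega>. \<forall>v\<in>\<Omega>. len \<Omega> le u + 1 \<le> len \<Omega> le v \<longrightarrow> le u v)"

end

theory Submission
  imports Defs
begin

text \<open>All five conditions say that P is a weak order: its strict part is negatively transitive,
  x < y implying x < z or z < y for every z. For the length function this is exactly being
  hierarchical, since in a weak order a longest chain ending at u may end at any v incomparable
  with u instead.

  In a weak order all maximal elements m of an ideal I have the same strict lower set L, and
  I = max I \<union> L. For equicardinal ideals, maximal elements of the one are incomparable to those of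
  the other (otherwise one ideal would lie strictly inside the other), so L is shared and
  |max I| = |I| - |L| is determined by |I|.

  Conversely, suppose a minimal element c of an upper cut B is not below some d \<in> B, and take
  d minimal with this property. Then the ideal (\<Omega> - B) \<union> min B and the ideal obtained from it
  by exchanging c for d have the same size, but the latter has fewer maximal elements, because
  d lies above another minimal element of B.

  Finally, if minimal elements of upper cuts always lie below the rest of the cut, then z is
  minimal in the least upper cut R containing z (otherwise R - min R would be smaller), every
  element outside R is strictly below z, and every non-minimal element of R is above z; this
  gives negative transitivity.

  Conditions (2) and (3) are (4) and (5) for the dual order.\<close>

definition weak_order_on :: "'a set \<Rightarrow> ('a \<Rightarrow> 'a \<Rightarrow> bool) \<Rightarrow> bool" where
  "weak_order_on \<Omega> le \<longleftrightarrow> (\<forall>x\<in>\<Omega>. \<forall>y\<in>\<Omega>. \<forall>z\<in>\<Omega>. le x y \<and> x \<noteq> y \<longrightarrow>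
      (le x z \<and> x \<noteq> z) \<or> (le z y \<and> z \<noteq> y))"

definition upper_cut :: "'a set \<Rightarrow> ('a \<Rightarrow> 'a \<Rightarrow> bool) \<Rightarrow> 'a set \<Rightarrow> bool" where
  "upper_cut \<Omega> le B \<longleftrightarrow> B \<subseteq> \<Omega> \<and> (\<forall>a\<in>\<Omega> - B. \<forall>b\<in>B. le a b)"

definition card_determines_card_maxs :: "'a set \<Rightarrow> ('a \<Rightarrow> 'a \<Rightarrow> bool) \<Rightarrow> bool" where
  "card_determines_card_maxs \<Omega> le \<longleftrightarrow> (\<forall>I\<in>ideals \<Omega> le. \<forall>J\<in>ideals \<Omega> le.
      card I = card J \<longrightarrow> card (maxs le I) = card (maxs le J))"

definition mins_below_in_upper_cuts :: "'a set \<Rightarrow> ('a \<Rightarrow> 'a \<Rightarrow> bool) \<Rightarrow> bool" where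
  "mins_below_in_upper_cuts \<Omega> le \<longleftrightarrow>
     (\<forall>B. upper_cut \<Omega> le B \<longrightarrow> (\<forall>c\<in>mins le B. \<forall>d\<in>B - mins le B. le c d))"

lemma poset_on_dual_rel: "poset_on \<Omega> le \<Longrightarrow> poset_on \<Omega> (dual_rel le)"
  unfolding poset_on_def dual_rel_def by blast

lemma weak_order_on_dual_rel: "weak_order_on \<Omega> (dual_rel le) \<longleftrightarrow> weak_order_on \<Omega> le"
  unfolding weak_order_on_def dual_rel_def by blast

lemma maxs_dual_rel: "maxs (dual_rel le) = mins le"
  unfolding maxs_def mins_def dual_rel_def by (intro ext) simp

lemma mins_dual_rel: "mins (dual_rel le) = maxs le"
  unfolding maxs_def mins_def dual_rel_def by (intro ext) simp

lemma maxs_subset: "maxs le B \<subseteq> B"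
  unfolding maxs_def by blast

lemma mins_subset: "mins le B \<subseteq> B"
  unfolding mins_def by blast

lemma mins_minimal: "b \<in> mins le B \<Longrightarrow> c \<in> B \<Longrightarrow> le c b \<Longrightarrow> c = b"
  unfolding mins_def by blast

lemma poset_on_refl: "poset_on \<Omega> le \<Longrightarrow> x \<in> \<Omega> \<Longrightarrow> le x x"
  unfolding poset_on_def by blast

lemma poset_on_antisym:
  "poset_on \<Omega> le \<Longrightarrow> x \<in> \<Omega> \<Longrightarrow> y \<in> \<Omega> \<Longrightarrow> le x y \<Longrightarrow> le y x \<Longrightarrow> x = y"
  unfolding poset_on_def by blast

lemma poset_on_trans:
  "poset_on \<Omega> le \<Longrightarrow> x \<in> \<Omega> \<Longrightarrow> y \<in> \<Omega> \<Longrightarrow> z \<in> \<Omega> \<Longrightarrow> le x y \<Longrightarrow> le y z \<Longrightarrow> le x z"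
  unfolding poset_on_def by blast

lemma weak_order_onD:
  "weak_order_on \<Omega> le \<Longrightarrow> x \<in> \<Omega> \<Longrightarrow> y \<in> \<Omega> \<Longrightarrow> z \<in> \<Omega> \<Longrightarrow> le x y \<Longrightarrow> x \<noteq> y \<Longrightarrow>
    (le x z \<and> x \<noteq> z) \<or> (le z y \<and> z \<noteq> y)"
  unfolding weak_order_on_def by blast

lemma maxs_nonempty:
  assumes po: "poset_on \<Omega> le" and "S \<subseteq> \<Omega>" "finite S" "S \<noteq> {}"
  shows "maxs le S \<noteq> {}"
  using \<open>finite S\<close> \<open>S \<noteq> {}\<close> \<open>S \<subseteq> \<Omega>\<close>
proof (induction S rule: finite_ne_induct)
  case (singleton x)
  then show ?case unfolding maxs_def by blast
next
  case (insert x F)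
  then obtain m where m: "m \<in> F" "\<forall>c\<in>F. le m c \<longrightarrow> c = m" unfolding maxs_def by blast
  show ?case
  proof (cases "le m x")
    case True
    have "c = x" if "c \<in> F" "le x c" for c
    proof -
      have "x \<in> \<Omega>" "m \<in> \<Omega>" "c \<in> \<Omega>" using insert.prems m(1) that(1) by auto
      then have "le m c" using poset_on_trans[OF po] True that(2) by blast
      then have "c = m" using m(2) that(1) by blast
      then show "c = x" using poset_on_antisym[OF po] \<open>x \<in> \<Omega>\<close> \<open>m \<in> \<Omega>\<close> True that(2) by blast
    qed
    then have "x \<in> maxs le (insert x F)" unfolding maxs_def by blast
    then show ?thesis by blast
  next
    case False
    then have "m \<in> maxs le (insert x F)" using m unfolding maxs_def by blast
    then show ?thesis by blast
  qed
qed

lemma mins_nonempty: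
  "poset_on \<Omega> le \<Longrightarrow> S \<subseteq> \<Omega> \<Longrightarrow> finite S \<Longrightarrow> S \<noteq> {} \<Longrightarrow> mins le S \<noteq> {}"
  using maxs_nonempty[OF poset_on_dual_rel] by (simp add: maxs_dual_rel)

lemma finite_chain_cards:
  "finite \<Omega> \<Longrightarrow> finite {card C | C. is_chain \<Omega> le C \<and> y \<in> C \<and> (\<forall>c\<in>C. le c y)}"
  by (rule finite_subset[of _ "card ` Pow \<Omega>"]) (auto simp: is_chain_def)

lemma len_chain_card_le:
  assumes "finite \<Omega>" and "is_chain \<Omega> le C" "y \<in> C" "\<forall>c\<in>C. le c y"
  shows "card C \<le> len \<Omega> le y"
  unfolding len_def using finite_chain_cards[OF assms(1)] assms(2-4) by (intro Max_ge) auto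

lemma len_attained:
  assumes fin: "finite \<Omega>" and po: "poset_on \<Omega> le" and y: "y \<in> \<Omega>"
  obtains C where "is_chain \<Omega> le C" "y \<in> C" "\<forall>c\<in>C. le c y" "card C = len \<Omega> le y"
proof -
  have "is_chain \<Omega> le {y}" "le y y"
    using y poset_on_refl[OF po] unfolding is_chain_def by auto
  then have "{card C | C. is_chain \<Omega> le C \<and> y \<in> C \<and> (\<forall>c\<in>C. le c y)} \<noteq> {}" by blast
  with finite_chain_cards[OF fin]
  have "len \<Omega> le y \<in> {card C | C. is_chain \<Omega> le C \<and> y \<in> C \<and> (\<forall>c\<in>C. le c y)}"
    unfolding len_def by (rule Max_in)
  then show ?thesis using that by auto
qed

lemma len_strict_mono:
  assumes fin: "finite \<Omega>" and po: "poset_on \<Omega> le" and x: "x \<in> \<Omega>" and y: "y \<in> \<Omega>"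
    and "le x y" "x \<noteq> y"
  shows "len \<Omega> le x < len \<Omega> le y"
proof -
  obtain C where C: "is_chain \<Omega> le C" "x \<in> C" "\<forall>c\<in>C. le c x" "card C = len \<Omega> le x"
    using len_attained[OF fin po x] by blast
  have "C \<subseteq> \<Omega>" using C(1) unfolding is_chain_def by blast
  then have below_y: "\<forall>c\<in>insert y C. le c y"
    using C(3) poset_on_trans[OF po _ x y] poset_on_refl[OF po y] \<open>le x y\<close> by blast
  have "y \<notin> C" using C(3) poset_on_antisym[OF po x y] assms(5,6) by blast
  have "is_chain \<Omega> le (insert y C)" using C(1) below_y y unfolding is_chain_def by blast
  then have "card (insert y C) \<le> len \<Omega> le y" using len_chain_card_le[OF fin] below_y by blast
  moreover have "card (insert y C) = card C + 1"
    using \<open>y \<notin> C\<close> finite_subset[OF \<open>C \<subseteq> \<Omega>\<close> fin] by simp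
  ultimately show ?thesis using C(4) by simp
qed

lemma weak_order_len_le_if_incomparable:
  assumes fin: "finite \<Omega>" and po: "poset_on \<Omega> le" and wo: "weak_order_on \<Omega> le"
    and u: "u \<in> \<Omega>" and v: "v \<in> \<Omega>" and "\<not> le u v" "\<not> le v u"
  shows "len \<Omega> le u \<le> len \<Omega> le v"
proof -
  obtain C where C: "is_chain \<Omega> le C" "u \<in> C" "\<forall>c\<in>C. le c u" "card C = len \<Omega> le u"
    using len_attained[OF fin po u] by blast
  have "C \<subseteq> \<Omega>" using C(1) unfolding is_chain_def by blast
  have "le c v" if "c \<in> C - {u}" for c
    using that C(3) \<open>C \<subseteq> \<Omega>\<close> weak_order_onD[OF wo _ u v] \<open>\<not> le v u\<close> by blast
  then have below_v: "\<forall>c\<in>insert v (C - {u}). le c v" using poset_on_refl[OF po v] by blast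
  have "is_chain \<Omega> le (insert v (C - {u}))"
    using C(1) below_v v unfolding is_chain_def by blast
  then have "card (insert v (C - {u})) \<le> len \<Omega> le v"
    using len_chain_card_le[OF fin] below_v by blast
  have "v \<notin> C" using C(3) \<open>\<not> le v u\<close> by blast
  moreover have "finite C" using \<open>C \<subseteq> \<Omega>\<close> fin by (rule finite_subset)
  ultimately have "card (insert v (C - {u})) = Suc (card (C - {u}))" by simp
  also have "\<dots> = card C" using \<open>finite C\<close> C(2) by (rule card_Suc_Diff1)
  finally show ?thesis using \<open>card (insert v (C - {u})) \<le> len \<Omega> le v\<close> C(4) by simp
qed

lemma hierarchical_iff_weak_order_on:
  assumes fin: "finite \<Omega>" and po: "poset_on \<Omega> le"
  shows "hierarchical \<Omega> le \<longleftrightarrow> weak_order_on \<Omega> le"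
proof
  assume h: "hierarchical \<Omega> le"
  show "weak_order_on \<Omega> le" unfolding weak_order_on_def
  proof (intro ballI impI)
    fix x y z assume xyz: "x \<in> \<Omega>" "y \<in> \<Omega>" "z \<in> \<Omega>" and "le x y \<and> x \<noteq> y"
    then have "len \<Omega> le x < len \<Omega> le y" using len_strict_mono[OF fin po] by blast
    then consider "len \<Omega> le x + 1 \<le> len \<Omega> le z" | "len \<Omega> le z + 1 \<le> len \<Omega> le y" by linarith
    then show "(le x z \<and> x \<noteq> z) \<or> (le z y \<and> z \<noteq> y)"
    proof cases
      case 1
      then show ?thesis using h xyz(1,3) unfolding hierarchical_def by auto
    next
      case 2
      then show ?thesis using h xyz(2,3) unfolding hierarchical_def by auto
    qed
  qed
next
  assume wo: "weak_order_on \<Omega> le"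
  show "hierarchical \<Omega> le" unfolding hierarchical_def
  proof (intro ballI impI)
    fix u v assume uv: "u \<in> \<Omega>" "v \<in> \<Omega>" and less: "len \<Omega> le u + 1 \<le> len \<Omega> le v"
    show "le u v"
    proof (rule ccontr)
      assume "\<not> le u v"
      moreover have "\<not> le v u"
        using len_strict_mono[OF fin po uv(2,1)] less by fastforce
      ultimately show False
        using weak_order_len_le_if_incomparable[OF fin po wo uv(2,1)] less by simp
    qed
  qed
qed

definition strict_lower_set :: "'a set \<Rightarrow> ('a \<Rightarrow> 'a \<Rightarrow> bool) \<Rightarrow> 'a \<Rightarrow> 'a set" where
  "strict_lower_set \<Omega> le m = {y\<in>\<Omega>. le y m \<and> y \<noteq> m}"

lemma weak_order_ideal_eq_maxs_Un:
  assumes wo: "weak_order_on \<Omega> le" and I: "I \<in> ideals \<Omega> le" and m: "m \<in> maxs le I"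
  shows "I = maxs le I \<union> strict_lower_set \<Omega> le m"
proof
  have "I \<subseteq> \<Omega>" "m \<in> I" using I m unfolding ideals_def maxs_def by blast+
  show "I \<subseteq> maxs le I \<union> strict_lower_set \<Omega> le m"
  proof
    fix x assume x: "x \<in> I"
    show "x \<in> maxs le I \<union> strict_lower_set \<Omega> le m"
    proof (cases "x \<in> maxs le I")
      case False
      then obtain c where c: "c \<in> I" "le x c" "c \<noteq> x" using x unfolding maxs_def by blast
      then have "(le x m \<and> x \<noteq> m) \<or> (le m c \<and> m \<noteq> c)"
        using weak_order_onD[OF wo, of x c m] \<open>I \<subseteq> \<Omega>\<close> x \<open>m \<in> I\<close> by blast
      then have "le x m \<and> x \<noteq> m" using m c(1) unfolding maxs_def by blast
      then show ?thesis using \<open>I \<subseteq> \<Omega>\<close> x unfolding strict_lower_set_def by blast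
    qed simp
  qed
  show "maxs le I \<union> strict_lower_set \<Omega> le m \<subseteq> I"
    using I \<open>m \<in> I\<close> unfolding maxs_def strict_lower_set_def ideals_def by blast
qed

lemma weak_order_card_ideal:
  assumes fin: "finite \<Omega>" and wo: "weak_order_on \<Omega> le"
    and I: "I \<in> ideals \<Omega> le" and m: "m \<in> maxs le I"
  shows "card I = card (maxs le I) + card (strict_lower_set \<Omega> le m)"
proof -
  have "maxs le I \<inter> strict_lower_set \<Omega> le m = {}"
    using m unfolding maxs_def strict_lower_set_def by blast
  moreover have "maxs le I \<subseteq> \<Omega>" "strict_lower_set \<Omega> le m \<subseteq> \<Omega>"
    using I unfolding maxs_def strict_lower_set_def ideals_def by blast+
  then have "finite (maxs le I)" "finite (strict_lower_set \<Omega> le m)"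
    using fin by (auto elim: finite_subset)
  ultimately show ?thesis
    using weak_order_ideal_eq_maxs_Un[OF wo I m] by (metis card_Un_disjoint)
qed

lemma weak_order_ideal_psubset:
  assumes wo: "weak_order_on \<Omega> le" and I: "I \<in> ideals \<Omega> le" and J: "J \<in> ideals \<Omega> le"
    and m: "m \<in> maxs le I" and n: "n \<in> maxs le J" and "le m n" "m \<noteq> n"
  shows "I \<subset> J"
proof -
  have "I \<subseteq> \<Omega>" "J \<subseteq> \<Omega>" "m \<in> I" "n \<in> J"
    using I J m n unfolding ideals_def maxs_def by blast+
  have "I \<subseteq> strict_lower_set \<Omega> le n"
  proof
    fix x assume x: "x \<in> I"
    have "(le m x \<and> m \<noteq> x) \<or> (le x n \<and> x \<noteq> n)"
      using weak_order_onD[OF wo, of m n x] \<open>I \<subseteq> \<Omega>\<close> \<open>J \<subseteq> \<Omega>\<close> x \<open>m \<in> I\<close> \<open>n \<in> J\<close>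
        \<open>le m n\<close> \<open>m \<noteq> n\<close> by blast
    then show "x \<in> strict_lower_set \<Omega> le n"
      using m x \<open>I \<subseteq> \<Omega>\<close> unfolding maxs_def strict_lower_set_def by blast
  qed
  also have "strict_lower_set \<Omega> le n \<subset> J"
    using J \<open>n \<in> J\<close> unfolding strict_lower_set_def ideals_def by blast
  finally show ?thesis .
qed

lemma weak_order_strict_lower_set_eq:
  assumes "weak_order_on \<Omega> le" "m \<in> \<Omega>" "n \<in> \<Omega>"
    and "\<not> (le m n \<and> m \<noteq> n)" "\<not> (le n m \<and> n \<noteq> m)"
  shows "strict_lower_set \<Omega> le m = strict_lower_set \<Omega> le n"
proof -
  have "strict_lower_set \<Omega> le a \<subseteq> strict_lower_set \<Omega> le b"
    if "a \<in> \<Omega>" "b \<in> \<Omega>" "\<not> (le b a \<and> b \<noteq> a)" for a b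
    using weak_order_onD[OF assms(1) _ that(1,2)] that(3) unfolding strict_lower_set_def by blast
  then show ?thesis using assms(2-5) by blast
qed

lemma weak_order_imp_card_determines_card_maxs:
  assumes fin: "finite \<Omega>" and po: "poset_on \<Omega> le" and wo: "weak_order_on \<Omega> le"
  shows "card_determines_card_maxs \<Omega> le"
  unfolding card_determines_card_maxs_def
proof (intro ballI impI)
  fix I J assume I: "I \<in> ideals \<Omega> le" and J: "J \<in> ideals \<Omega> le" and eq: "card I = card J"
  have "I \<subseteq> \<Omega>" "J \<subseteq> \<Omega>" using I J unfolding ideals_def by blast+
  then have "finite I" "finite J" using fin by (auto elim: finite_subset)
  show "card (maxs le I) = card (maxs le J)"
  proof (cases "I = {}")
    case True
    then have "J = {}" using eq \<open>finite J\<close> by simp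
    then show ?thesis using True unfolding maxs_def by simp
  next
    case False
    then have "J \<noteq> {}" using eq \<open>finite I\<close> by auto
    obtain m n where m: "m \<in> maxs le I" and n: "n \<in> maxs le J"
      using maxs_nonempty[OF po \<open>I \<subseteq> \<Omega>\<close> \<open>finite I\<close> False]
        maxs_nonempty[OF po \<open>J \<subseteq> \<Omega>\<close> \<open>finite J\<close> \<open>J \<noteq> {}\<close>] by blast
    have "m \<in> \<Omega>" "n \<in> \<Omega>" using m n \<open>I \<subseteq> \<Omega>\<close> \<open>J \<subseteq> \<Omega>\<close> unfolding maxs_def by blast+
    moreover have "\<not> (le m n \<and> m \<noteq> n)"
      using psubset_card_mono[OF \<open>finite J\<close> weak_order_ideal_psubset[OF wo I J m n]] eq by auto
    moreover have "\<not> (le n m \<and> n \<noteq> m)"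
      using psubset_card_mono[OF \<open>finite I\<close> weak_order_ideal_psubset[OF wo J I n m]] eq by auto
    ultimately have "strict_lower_set \<Omega> le m = strict_lower_set \<Omega> le n"
      using weak_order_strict_lower_set_eq[OF wo] by blast
    then show ?thesis
      using weak_order_card_ideal[OF fin wo I m] weak_order_card_ideal[OF fin wo J n] eq by simp
  qed
qed

lemma upper_cut_compl_Un_ideal:
  assumes po: "poset_on \<Omega> le" and B: "upper_cut \<Omega> le B" and "S \<subseteq> B"
    and down: "\<forall>s\<in>S. \<forall>e\<in>B. le e s \<longrightarrow> e \<in> S"
  shows "(\<Omega> - B) \<union> S \<in> ideals \<Omega> le"
  unfolding ideals_def
proof (intro CollectI conjI ballI impI)
  show "(\<Omega> - B) \<union> S \<subseteq> \<Omega>" using B \<open>S \<subseteq> B\<close> unfolding upper_cut_def by blast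
  fix v u assume v: "v \<in> (\<Omega> - B) \<union> S" and u: "u \<in> \<Omega>" and "le u v"
  show "u \<in> (\<Omega> - B) \<union> S"
  proof (cases "u \<in> B")
    case True
    have "v \<notin> \<Omega> - B"
    proof
      assume "v \<in> \<Omega> - B"
      then have "le v u" using B True unfolding upper_cut_def by blast
      then have "u = v" using poset_on_antisym[OF po u] \<open>le u v\<close> \<open>v \<in> \<Omega> - B\<close> by blast
      then show False using True \<open>v \<in> \<Omega> - B\<close> by blast
    qed
    then show ?thesis using v down True \<open>le u v\<close> by blast
  qed (use u in blast)
qed

lemma upper_cut_mins_subset_maxs:
  assumes po: "poset_on \<Omega> le" and B: "upper_cut \<Omega> le B"
  shows "mins le B \<subseteq> maxs le ((\<Omega> - B) \<union> mins le B)"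
proof
  fix m assume m: "m \<in> mins le B"
  have "e = m" if e: "e \<in> (\<Omega> - B) \<union> mins le B" "le m e" for e
  proof (cases "e \<in> B")
    case False
    then have "le e m" "e \<in> \<Omega>" "m \<in> \<Omega>"
      using B e(1) m unfolding upper_cut_def mins_def by blast+
    then show ?thesis using poset_on_antisym[OF po] e(2) by blast
  next
    case True
    then have "e \<in> mins le B" using e(1) by blast
    then show ?thesis using e(2) m unfolding mins_def by blast
  qed
  then show "m \<in> maxs le ((\<Omega> - B) \<union> mins le B)" using m unfolding maxs_def by blast
qed

lemma upper_cut_minimal_not_above:
  assumes fin: "finite \<Omega>" and po: "poset_on \<Omega> le" and B: "upper_cut \<Omega> le B"
    and c: "c \<in> mins le B" and d0: "d0 \<in> B - mins le B" "\<not> le c d0"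
  obtains d where "d \<in> B - mins le B" "\<not> le c d"
    "\<forall>e\<in>B. le e d \<and> e \<noteq> d \<longrightarrow> e \<in> mins le B - {c}"
proof -
  define X where "X = {d \<in> B - mins le B. \<not> le c d}"
  have "X \<subseteq> \<Omega>" using B unfolding upper_cut_def X_def by blast
  moreover have "X \<noteq> {}" using d0 unfolding X_def by blast
  ultimately obtain d where d: "d \<in> mins le X"
    using mins_nonempty[OF po _ finite_subset[OF _ fin]] by blast
  then have dB: "d \<in> B - mins le B" "\<not> le c d" unfolding mins_def X_def by blast+
  have "e \<in> mins le B - {c}" if e: "e \<in> B" "le e d" "e \<noteq> d" for e
  proof -
    have "B \<subseteq> \<Omega>" "c \<in> B" using B c unfolding upper_cut_def mins_def by blast+
    then have "\<not> le c e" using poset_on_trans[OF po] e dB by blast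
    then have "e \<in> mins le B"
      using d e unfolding mins_def X_def by blast
    moreover have "e \<noteq> c" using e dB by blast
    ultimately show ?thesis by blast
  qed
  then show ?thesis using that dB by blast
qed

lemma card_compl_Un:
  assumes fin: "finite \<Omega>" and "S \<subseteq> B" "B \<subseteq> \<Omega>"
  shows "card ((\<Omega> - B) \<union> S) = card (\<Omega> - B) + card S"
proof -
  have "finite S" using finite_subset[OF subset_trans[OF assms(2,3)] fin] .
  then show ?thesis
    by (rule card_Un_disjoint[OF finite_Diff[OF fin]]) (use assms(2) in blast)
qed

lemma upper_cut_exchange_ideal:
  assumes po: "poset_on \<Omega> le" and B: "upper_cut \<Omega> le B" and d: "d \<in> B"
    and below_d: "\<forall>e\<in>B. le e d \<and> e \<noteq> d \<longrightarrow> e \<in> mins le B - {c}"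
  shows "(\<Omega> - B) \<union> insert d (mins le B - {c}) \<in> ideals \<Omega> le"
proof (rule upper_cut_compl_Un_ideal[OF po B])
  show "insert d (mins le B - {c}) \<subseteq> B" using d mins_subset[of le B] by blast
  show "\<forall>s\<in>insert d (mins le B - {c}). \<forall>e\<in>B. le e s \<longrightarrow> e \<in> insert d (mins le B - {c})"
  proof (intro ballI impI)
    fix s e assume s: "s \<in> insert d (mins le B - {c})" and "e \<in> B" "le e s"
    show "e \<in> insert d (mins le B - {c})"
    proof (cases "s = d")
      case True
      then show ?thesis using below_d \<open>e \<in> B\<close> \<open>le e s\<close> by blast
    next
      case False
      then have "e = s" using s mins_minimal[of s le B e] \<open>e \<in> B\<close> \<open>le e s\<close> by blast
      then show ?thesis using s by blast
    qed
  qed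
qed

lemma card_exchange_min:
  assumes fin: "finite \<Omega>" and "B \<subseteq> \<Omega>" and c: "c \<in> mins le B" and d: "d \<in> B - mins le B"
  shows "card ((\<Omega> - B) \<union> insert d (mins le B - {c})) = card ((\<Omega> - B) \<union> mins le B)"
proof -
  have fM: "finite (mins le B)" using finite_subset[OF subset_trans[OF mins_subset \<open>B \<subseteq> \<Omega>\<close>] fin] .
  have "card (insert d (mins le B - {c})) = Suc (card (mins le B - {c}))"
    using fM d by simp
  also have "\<dots> = card (mins le B)" using fM c by (rule card_Suc_Diff1)
  finally have card_swap: "card (insert d (mins le B - {c})) = card (mins le B)" .
  have "card ((\<Omega> - B) \<union> insert d (mins le B - {c})) =
      card (\<Omega> - B) + card (insert d (mins le B - {c}))"
    by (rule card_compl_Un[OF fin _ \<open>B \<subseteq> \<Omega>\<close>]) (use d mins_subset[of le B] in blast)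
  also have "\<dots> = card (\<Omega> - B) + card (mins le B)" by (simp only: card_swap)
  also have "\<dots> = card ((\<Omega> - B) \<union> mins le B)"
    by (rule card_compl_Un[OF fin mins_subset \<open>B \<subseteq> \<Omega>\<close>, symmetric])
  finally show ?thesis .
qed

lemma card_maxs_exchange_less:
  assumes fin: "finite \<Omega>" and B: "upper_cut \<Omega> le B" and d: "d \<in> B"
    and w: "w \<in> mins le B - {c}" "le w d" "w \<noteq> d" and c: "c \<in> mins le B"
  shows "card (maxs le ((\<Omega> - B) \<union> insert d (mins le B - {c}))) < card (mins le B)"
proof -
  let ?J = "(\<Omega> - B) \<union> insert d (mins le B - {c})"
  have "B \<subseteq> \<Omega>" using B unfolding upper_cut_def by blast
  have fM: "finite (mins le B)" using finite_subset[OF subset_trans[OF mins_subset \<open>B \<subseteq> \<Omega>\<close>] fin] .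
  have "d \<in> ?J" by blast
  have "maxs le ?J \<subseteq> insert d (mins le B - {c} - {w})"
  proof
    fix x assume x: "x \<in> maxs le ?J"
    then have "x \<in> ?J" using maxs_subset[of le ?J] by blast
    have "x \<notin> \<Omega> - B"
    proof
      assume "x \<in> \<Omega> - B"
      then have "le x d" using B d unfolding upper_cut_def by blast
      then have "d = x" using x \<open>d \<in> ?J\<close> unfolding maxs_def by blast
      then show False using \<open>x \<in> \<Omega> - B\<close> d by blast
    qed
    moreover have "x \<noteq> w" using x \<open>d \<in> ?J\<close> w(2,3) unfolding maxs_def by blast
    ultimately show "x \<in> insert d (mins le B - {c} - {w})" using \<open>x \<in> ?J\<close> by blast
  qed
  then have "card (maxs le ?J) \<le> card (insert d (mins le B - {c} - {w}))"
    using fM by (intro card_mono) auto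
  also have "\<dots> \<le> Suc (card (mins le B - {c} - {w}))"
    by (rule card_insert_le_m1) simp_all
  also have "\<dots> = card (mins le B - {c})"
    using fM w(1) by (intro card_Suc_Diff1) auto
  also have "\<dots> < card (mins le B)"
    using fM c by (rule card_Diff1_less)
  finally show ?thesis .
qed

lemma card_determines_card_maxs_imp_mins_below_in_upper_cuts:
  assumes fin: "finite \<Omega>" and po: "poset_on \<Omega> le" and cd: "card_determines_card_maxs \<Omega> le"
  shows "mins_below_in_upper_cuts \<Omega> le"
  unfolding mins_below_in_upper_cuts_def
proof (intro allI impI ballI)
  fix B c d0 assume B: "upper_cut \<Omega> le B" and c: "c \<in> mins le B" and d0: "d0 \<in> B - mins le B"
  show "le c d0"
  proof (rule ccontr)
    assume "\<not> le c d0"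
    then obtain d where d: "d \<in> B - mins le B" "\<not> le c d"
      and below_d: "\<forall>e\<in>B. le e d \<and> e \<noteq> d \<longrightarrow> e \<in> mins le B - {c}"
      using upper_cut_minimal_not_above[OF fin po B c d0] by blast
    obtain w where "w \<in> B" "le w d" "w \<noteq> d" using d unfolding mins_def by blast
    then have w: "w \<in> mins le B - {c}" using below_d by blast
    have "B \<subseteq> \<Omega>" using B unfolding upper_cut_def by blast
    let ?I = "(\<Omega> - B) \<union> mins le B" and ?J = "(\<Omega> - B) \<union> insert d (mins le B - {c})"
    have "\<forall>s\<in>mins le B. \<forall>e\<in>B. le e s \<longrightarrow> e \<in> mins le B"
      using mins_minimal by metis
    then have "?I \<in> ideals \<Omega> le" by (rule upper_cut_compl_Un_ideal[OF po B mins_subset])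
    moreover have "?J \<in> ideals \<Omega> le"
      using d(1) below_d by (intro upper_cut_exchange_ideal[OF po B]) auto
    moreover have "card ?J = card ?I" using card_exchange_min[OF fin \<open>B \<subseteq> \<Omega>\<close> c d(1)] .
    ultimately have "card (maxs le ?J) = card (maxs le ?I)"
      using cd unfolding card_determines_card_maxs_def by blast
    moreover have "card (maxs le ?J) < card (mins le B)"
      using card_maxs_exchange_less[OF fin B _ w \<open>le w d\<close> \<open>w \<noteq> d\<close> c] d(1) by blast
    moreover have "finite ?I"
      using fin finite_subset[OF mins_subset finite_subset[OF \<open>B \<subseteq> \<Omega>\<close> fin]] by simp
    then have "card (mins le B) \<le> card (maxs le ?I)"
      by (rule card_mono[OF finite_subset[OF maxs_subset]]) (rule upper_cut_mins_subset_maxs[OF po B])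
    ultimately show False by simp
  qed
qed

definition least_upper_cut :: "'a set \<Rightarrow> ('a \<Rightarrow> 'a \<Rightarrow> bool) \<Rightarrow> 'a \<Rightarrow> 'a set" where
  "least_upper_cut \<Omega> le z = \<Inter>{B. upper_cut \<Omega> le B \<and> z \<in> B}"

lemma upper_cut_least_upper_cut:
  assumes "z \<in> \<Omega>"
  shows "upper_cut \<Omega> le (least_upper_cut \<Omega> le z)"
  unfolding upper_cut_def
proof (intro conjI ballI)
  have "upper_cut \<Omega> le \<Omega>" unfolding upper_cut_def by blast
  then show "least_upper_cut \<Omega> le z \<subseteq> \<Omega>"
    using assms unfolding least_upper_cut_def by blast
  fix a b assume a: "a \<in> \<Omega> - least_upper_cut \<Omega> le z" and b: "b \<in> least_upper_cut \<Omega> le z"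
  then obtain B where B: "upper_cut \<Omega> le B" "z \<in> B" "a \<notin> B"
    unfolding least_upper_cut_def by blast
  then have "b \<in> B" using b unfolding least_upper_cut_def by blast
  then show "le a b" using a B unfolding upper_cut_def by blast
qed

lemma mem_least_upper_cut: "z \<in> \<Omega> \<Longrightarrow> z \<in> least_upper_cut \<Omega> le z"
  unfolding least_upper_cut_def by blast

lemma least_upper_cut_subset:
  "upper_cut \<Omega> le B \<Longrightarrow> z \<in> B \<Longrightarrow> least_upper_cut \<Omega> le z \<subseteq> B"
  unfolding least_upper_cut_def by blast

lemma upper_cut_Diff_mins:
  assumes mb: "mins_below_in_upper_cuts \<Omega> le" and B: "upper_cut \<Omega> le B"
  shows "upper_cut \<Omega> le (B - mins le B)"
  unfolding upper_cut_def
proof (intro conjI ballI)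
  show "B - mins le B \<subseteq> \<Omega>" using B unfolding upper_cut_def by blast
  fix a b assume a: "a \<in> \<Omega> - (B - mins le B)" and b: "b \<in> B - mins le B"
  show "le a b"
  proof (cases "a \<in> B")
    case True
    then have "a \<in> mins le B" using a by blast
    then show ?thesis using mb B b unfolding mins_below_in_upper_cuts_def by blast
  next
    case False
    then show ?thesis using B a b unfolding upper_cut_def by blast
  qed
qed

lemma mem_mins_least_upper_cut:
  assumes fin: "finite \<Omega>" and po: "poset_on \<Omega> le" and mb: "mins_below_in_upper_cuts \<Omega> le"
    and z: "z \<in> \<Omega>"
  shows "z \<in> mins le (least_upper_cut \<Omega> le z)"
proof (rule ccontr)
  let ?R = "least_upper_cut \<Omega> le z"
  assume "z \<notin> mins le ?R"
  then have "?R \<subseteq> ?R - mins le ?R"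
    using least_upper_cut_subset[OF upper_cut_Diff_mins[OF mb upper_cut_least_upper_cut[OF z]]]
      mem_least_upper_cut[OF z] by blast
  moreover have "?R \<subseteq> \<Omega>" using upper_cut_least_upper_cut[OF z] unfolding upper_cut_def by blast
  then have "mins le ?R \<noteq> {}"
    using mins_nonempty[OF po _ finite_subset[OF _ fin]] mem_least_upper_cut[OF z] by blast
  ultimately show False using mins_subset[of le ?R] by blast
qed

lemma mins_below_in_upper_cuts_imp_weak_order:
  assumes fin: "finite \<Omega>" and po: "poset_on \<Omega> le" and mb: "mins_below_in_upper_cuts \<Omega> le"
  shows "weak_order_on \<Omega> le"
  unfolding weak_order_on_def
proof (intro ballI impI)
  fix x y z assume "x \<in> \<Omega>" "y \<in> \<Omega>" "z \<in> \<Omega>" and xy: "le x y \<and> x \<noteq> y"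
  let ?R = "least_upper_cut \<Omega> le z"
  have R: "upper_cut \<Omega> le ?R" and zR: "z \<in> mins le ?R"
    using upper_cut_least_upper_cut[OF \<open>z \<in> \<Omega>\<close>] mem_mins_least_upper_cut[OF fin po mb \<open>z \<in> \<Omega>\<close>]
    by blast+
  consider "y \<notin> ?R" | "x \<notin> ?R" | "x \<in> ?R" "y \<in> ?R" by blast
  then show "(le x z \<and> x \<noteq> z) \<or> (le z y \<and> z \<noteq> y)"
  proof cases
    case 1
    then have "le y z" "y \<noteq> z" using R zR \<open>y \<in> \<Omega>\<close> unfolding upper_cut_def mins_def by blast+
    moreover have "x \<noteq> z" using \<open>le y z\<close> xy poset_on_antisym[OF po \<open>x \<in> \<Omega>\<close> \<open>y \<in> \<Omega>\<close>] by blast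
    ultimately show ?thesis using xy poset_on_trans[OF po \<open>x \<in> \<Omega>\<close> \<open>y \<in> \<Omega>\<close> \<open>z \<in> \<Omega>\<close>] by blast
  next
    case 2
    then have "le x z" "x \<noteq> z" using R zR \<open>x \<in> \<Omega>\<close> unfolding upper_cut_def mins_def by blast+
    then show ?thesis by blast
  next
    case 3
    then have "y \<in> ?R - mins le ?R" using xy unfolding mins_def by blast
    then have "le z y" "z \<noteq> y"
      using mb R zR unfolding mins_below_in_upper_cuts_def by blast+
    then show ?thesis by blast
  qed
qed

lemma card_determines_card_maxs_iff_weak_order_on:
  assumes "finite \<Omega>" and "poset_on \<Omega> le"
  shows "card_determines_card_maxs \<Omega> le \<longleftrightarrow> weak_order_on \<Omega> le"
  using weak_order_imp_card_determines_card_maxs[OF assms]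
    card_determines_card_maxs_imp_mins_below_in_upper_cuts[OF assms]
    mins_below_in_upper_cuts_imp_weak_order[OF assms] by blast

lemma mins_below_in_upper_cuts_iff_weak_order_on:
  assumes "finite \<Omega>" and "poset_on \<Omega> le"
  shows "mins_below_in_upper_cuts \<Omega> le \<longleftrightarrow> weak_order_on \<Omega> le"
  using weak_order_imp_card_determines_card_maxs[OF assms]
    card_determines_card_maxs_imp_mins_below_in_upper_cuts[OF assms]
    mins_below_in_upper_cuts_imp_weak_order[OF assms] by blast

lemma mins_below_in_upper_cuts_altdef:
  "mins_below_in_upper_cuts \<Omega> le \<longleftrightarrow> (\<forall>B. B \<subseteq> \<Omega> \<longrightarrow> (\<forall>a\<in>\<Omega> - B. \<forall>b\<in>B. le a b) \<longrightarrow>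
     (\<forall>c\<in>mins le B. \<forall>d\<in>B - mins le B. le c d))"
  unfolding mins_below_in_upper_cuts_def upper_cut_def by blast

lemma mins_below_in_upper_cuts_dual_rel_altdef:
  "mins_below_in_upper_cuts \<Omega> (dual_rel le) \<longleftrightarrow> (\<forall>A. A \<subseteq> \<Omega> \<longrightarrow> (\<forall>a\<in>A. \<forall>b\<in>\<Omega> - A. le a b) \<longrightarrow>
     (\<forall>c\<in>A - maxs le A. \<forall>d\<in>maxs le A. le c d))"
  unfolding mins_below_in_upper_cuts_def upper_cut_def mins_dual_rel dual_rel_def by blast

theorem lemma2p6:
  fixes \<Omega> :: "'a set" and le :: "'a \<Rightarrow> 'a \<Rightarrow> bool"
  assumes fin: "finite \<Omega>" and po: "poset_on \<Omega> le"
  defines "C1 \<equiv> hierarchical \<Omega> le"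
      and "C2 \<equiv> (\<forall>D\<in>ideals \<Omega> (dual_rel le). \<forall>B\<in>ideals \<Omega> (dual_rel le).
                  card D = card B \<longrightarrow> card (mins le D) = card (mins le B))"
      and "C3 \<equiv> (\<forall>A. A \<subseteq> \<Omega> \<longrightarrow> (\<forall>a\<in>A. \<forall>b\<in>\<Omega> - A. le a b) \<longrightarrow>
                  (\<forall>c\<in>A - maxs le A. \<forall>d\<in>maxs le A. le c d))"
      and "C4 \<equiv> (\<forall>I\<in>ideals \<Omega> le. \<forall>J\<in>ideals \<Omega> le.
                  card I = card J \<longrightarrow> card (maxs le I) = card (maxs le J))"
      and "C5 \<equiv> (\<forall>B. B \<subseteq> \<Omega> \<longrightarrow> (\<forall>a\<in>\<Omega> - B. \<forall>b\<in>B. le a b) \<longrightarrow>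
                  (\<forall>c\<in>mins le B. \<forall>d\<in>B - mins le B. le c d))"
  shows "(C1 \<longleftrightarrow> C2) \<and> (C1 \<longleftrightarrow> C3) \<and> (C1 \<longleftrightarrow> C4) \<and> (C1 \<longleftrightarrow> C5)"
proof -
  have po_dual: "poset_on \<Omega> (dual_rel le)" using po by (rule poset_on_dual_rel)
  note wo_dual = weak_order_on_dual_rel[of \<Omega> le]
  have "C1 \<longleftrightarrow> weak_order_on \<Omega> le"
    unfolding C1_def using fin po by (rule hierarchical_iff_weak_order_on)
  moreover have "C2 \<longleftrightarrow> weak_order_on \<Omega> le"
    using card_determines_card_maxs_iff_weak_order_on[OF fin po_dual] wo_dual
    unfolding C2_def card_determines_card_maxs_def maxs_dual_rel by blast
  moreover have "C3 \<longleftrightarrow> weak_order_on \<Omega> le"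
    using mins_below_in_upper_cuts_iff_weak_order_on[OF fin po_dual] wo_dual
    unfolding C3_def mins_below_in_upper_cuts_dual_rel_altdef by blast
  moreover have "C4 \<longleftrightarrow> weak_order_on \<Omega> le"
    using card_determines_card_maxs_iff_weak_order_on[OF fin po]
    unfolding C4_def card_determines_card_maxs_def by blast
  moreover have "C5 \<longleftrightarrow> weak_order_on \<Omega> le"
    using mins_below_in_upper_cuts_iff_weak_order_on[OF fin po]
    unfolding C5_def mins_below_in_upper_cuts_altdef by blast
  ultimately show ?thesis by blast
qed

end
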